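(* Let $(\mathcal{L},[\,,\,])$ be a Lie algebra over $\mathbf{k}$ with basis $X=\{x_j:j\in J\}$, $J$ totally ordered, $k\in\mathbf{k}$ nonzero, and let $\hat A,\hat q,\hat x_j,R$ and the model monomials be as described below. Let $W$ be a $\mathbf{k}$-vector space with a basis $\{\mathring{w}_M\}$ indexed bijectively by the model monomials $M$. Then there exists a $\mathbf{k}$-linear map $\sigma:\hat A\to W$ with $\sigma(M)=\mathring{w}_M$ for every model monomial $M$ and $\sigma(R)=0$; equivalently $\sigma$ vanishes on every element $a\,(\widehat{[x,y]}-[\hat x,\hat y]_{6,k})\,b$ with $a,b\in\hat A$, $x,y\in X$, where $[\hat x,\hat y]_{6,k}=\hat x\hat y-\hat y\hat x-\hat x\hat y\hat q+\hat y\hat x\hat q+k\hat x\hat q\hat y-k\hat y\hat q\hat x$.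
   Context: Construction: $\tilde q\notin X$ a symbol, $V$ the vector space with basis $X\cup\{\tilde q\}$, $T(V)$ its tensor algebra, $I$ the two-sided ideal generated by $\tilde q\otimes\tilde q-\tilde q$ and all $\tilde q\otimes a\otimes\tilde q-\tilde q\otimes a$ ($a\in T(V)$), $\hat A=T(V)/I$, $\hat q=\tilde q+I$, $\hat 1=1+I$, $\hat x_j=x_j+I$, $x\mapsto\hat x$ the linear extension to $\mathcal{L}$; $R$ is the two-sided ideal of $\hat A$ generated by all $\widehat{[x,y]}-[\hat x,\hat y]_{6,k}$, $x,y\in\mathcal{L}$. Model monomials: (a) $\hat q\hat x_{j_1}\cdots\hat x_{j_m}$, $m\ge0$, $j_1\le\cdots\le j_m$; (b) $\hat x_{i_1}\cdots\hat x_{i_t}\hat x_{j_0}\hat q\hat x_{j_1}\cdots\hat x_{j_m}$, $t,m\ge0$, $i_1\le\cdots\le i_t$, $j_0\le j_1\le\cdots\le j_m$; (c) $\hat x_{j_1}\cdots\hat x_{j_m}$, $m\ge0$, $j_1\le\cdots\le j_m$ (empty product $=\hat 1$). *)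

theory Defs
  imports Main "HOL-Library.Poly_Mapping"
begin

(* Generators of V: the basis symbols x_j (Xg j) and the extra symbol q~ (Qt). *)
datatype 'j gen = Qt | Xg 'j

(* Tensor algebra T(V): finitely supported k-linear combinations of words in the generators. *)
type_synonym ('j, 'k) tens = "'j gen list \<Rightarrow>\<^sub>0 'k"

definition wd :: "'j gen list \<Rightarrow> ('j, 'k::comm_ring_1) tens" where
  "wd w = Poly_Mapping.single w 1"

definition scal :: "'k::comm_ring_1 \<Rightarrow> ('a \<Rightarrow>\<^sub>0 'k) \<Rightarrow> ('a \<Rightarrow>\<^sub>0 'k)" where
  "scal c p = Poly_Mapping.map (\<lambda>x. c * x) p"

definition tmul :: "('j, 'k::comm_ring_1) tens \<Rightarrow> ('j, 'k) tens \<Rightarrow> ('j, 'k) tens" where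
  "tmul p r = (\<Sum>u\<in>Poly_Mapping.keys p. \<Sum>v\<in>Poly_Mapping.keys r.
      Poly_Mapping.single (u @ v) (Poly_Mapping.lookup p u * Poly_Mapping.lookup r v))"

definition klinear :: "(('a \<Rightarrow>\<^sub>0 'k::comm_ring_1) \<Rightarrow> ('b \<Rightarrow>\<^sub>0 'k)) \<Rightarrow> bool" where
  "klinear f \<longleftrightarrow> (\<forall>p r. f (p + r) = f p + f r) \<and> (\<forall>c p. f (scal c p) = scal c (f p))"

(* Lie algebra L with basis {x_j}: elements are coordinate vectors 'j \<Rightarrow>\<^sub>0 'k,
   the bracket is the bilinear extension of the structure map c with c i j = [x_i, x_j]. *)
definition lbr :: "('j \<Rightarrow> 'j \<Rightarrow> ('j \<Rightarrow>\<^sub>0 'k::comm_ring_1)) \<Rightarrow> ('j \<Rightarrow>\<^sub>0 'k) \<Rightarrow> ('j \<Rightarrow>\<^sub>0 'k) \<Rightarrow> ('j \<Rightarrow>\<^sub>0 'k)" where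
  "lbr c u v = (\<Sum>i\<in>Poly_Mapping.keys u. \<Sum>j\<in>Poly_Mapping.keys v. scal (Poly_Mapping.lookup u i * Poly_Mapping.lookup v j) (c i j))"

definition is_lie_bracket :: "('j \<Rightarrow> 'j \<Rightarrow> ('j \<Rightarrow>\<^sub>0 'k::comm_ring_1)) \<Rightarrow> bool" where
  "is_lie_bracket c \<longleftrightarrow>
     (\<forall>x. lbr c x x = 0) \<and>
     (\<forall>x y z. lbr c x (lbr c y z) + lbr c y (lbr c z x) + lbr c z (lbr c x y) = 0)"

(* the linear map x \<mapsto> \<hat>x from L to T(V) (composed with the quotient map to \<hat>A) *)
definition hatL :: "('j \<Rightarrow>\<^sub>0 'k::comm_ring_1) \<Rightarrow> ('j, 'k) tens" where
  "hatL u = (\<Sum>j\<in>Poly_Mapping.keys u. scal (Poly_Mapping.lookup u j) (wd [Xg j]))"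

definition br6 :: "'k::comm_ring_1 \<Rightarrow> 'j \<Rightarrow> 'j \<Rightarrow> ('j, 'k) tens" where
  "br6 k i j = wd [Xg i, Xg j] - wd [Xg j, Xg i] - wd [Xg i, Xg j, Qt] + wd [Xg j, Xg i, Qt]
      + scal k (wd [Xg i, Qt, Xg j]) - scal k (wd [Xg j, Qt, Xg i])"

definition model_monomial :: "'j::linorder gen list \<Rightarrow> bool" where
  "model_monomial w \<longleftrightarrow>
     (\<exists>js. sorted js \<and> w = Qt # map Xg js) \<or>
     (\<exists>is j0 js. sorted is \<and> sorted (j0 # js) \<and> w = map Xg is @ [Xg j0, Qt] @ map Xg js) \<or>
     (\<exists>js. sorted js \<and> w = map Xg js)"

end

theory Submission
  imports Defs
begin

(* \<sigma> is read off from a T(V)-module M.  Let S be the free module on the sorted index lists,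
   i.e. on the PBW monomials of U(L).
   1. PBW representation.  For any Lie bracket c, x_l acts on a sorted monomial by inserting l
      and straightening with c.  Theorem pbw_representation shows that this is a representation
      of L: the commutator of x_a and x_b acts as [x_a, x_b].
   2. The module M = S \<oplus> (S \<otimes> S) \<oplus> S, whose summands match the three kinds of model
      monomials.  \<tilde>q projects onto the last summand; x_a acts by the PBW representation for c
      on the first summand and for a second bracket c' on the last one, and on the middle one
      by x_a \<otimes> 1 plus a copy 1 \<otimes> x_a of its action on the last summand.  If c = k \<cdot> c', all
      generators of I and R act as zero.
   3. A read-out map M \<rightarrow> W, defined on a basis by a triangular recursion, sends M \<cdot> v0 to M
      for every model monomial M, where v0 is a fixed base vector.
   With c' = c / k, the map \<sigma>(p) = readout (p \<cdot> v0) has all required properties. *)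

lemma lookup_scal [simp]: "Poly_Mapping.lookup (scal c p) x = c * Poly_Mapping.lookup p x"
  unfolding scal_def by transfer (simp add: when_def)

lemma scal_add_right: "scal c (p + q) = scal c p + scal c q"
  by (rule poly_mapping_eqI) (simp add: lookup_add algebra_simps)
lemma scal_add_left: "scal (a + b) p = scal a p + scal b p"
  by (rule poly_mapping_eqI) (simp add: lookup_add algebra_simps)
lemma scal_diff_right: "scal c (p - q) = scal c p - scal c q"
  by (rule poly_mapping_eqI) (simp add: lookup_minus algebra_simps)
lemma scal_scal [simp]: "scal a (scal b p) = scal (a * b) p"
  by (rule poly_mapping_eqI) (simp add: algebra_simps)
lemma scal_one [simp]: "scal 1 p = p"
  by (rule poly_mapping_eqI) simp
lemma scal_zero_left [simp]: "scal 0 p = 0"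
  by (rule poly_mapping_eqI) simp
lemma scal_zero_right [simp]: "scal c 0 = 0"
  by (rule poly_mapping_eqI) simp
lemma scal_sum: "scal c (sum f S) = (\<Sum>x\<in>S. scal c (f x))"
  by (rule poly_mapping_eqI) (simp add: lookup_sum sum_distrib_left)
lemma scal_single [simp]: "scal c (Poly_Mapping.single x a) = Poly_Mapping.single x (c * a)"
  by (rule poly_mapping_eqI) (simp add: lookup_single when_def)
lemma keys_scal: "Poly_Mapping.keys (scal c p) \<subseteq> Poly_Mapping.keys p"
  by (auto simp: in_keys_iff)

definition lin_ext :: "('a \<Rightarrow> ('b \<Rightarrow>\<^sub>0 'k::comm_ring_1)) \<Rightarrow> ('a \<Rightarrow>\<^sub>0 'k) \<Rightarrow> ('b \<Rightarrow>\<^sub>0 'k)" where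
  "lin_ext f v = (\<Sum>a\<in>Poly_Mapping.keys v. scal (Poly_Mapping.lookup v a) (f a))"

lemma lin_ext_superset:
  assumes "finite S" "Poly_Mapping.keys v \<subseteq> S"
  shows "lin_ext f v = (\<Sum>a\<in>S. scal (Poly_Mapping.lookup v a) (f a))"
  unfolding lin_ext_def
  by (rule sum.mono_neutral_left) (use assms in \<open>auto simp: in_keys_iff\<close>)

lemma lin_ext_add: "lin_ext f (v + w) = lin_ext f v + lin_ext f w"
proof -
  let ?S = "Poly_Mapping.keys v \<union> Poly_Mapping.keys w"
  have "lin_ext f (v + w) = (\<Sum>a\<in>?S. scal (Poly_Mapping.lookup (v + w) a) (f a))"
    by (rule lin_ext_superset) (auto simp: keys_add)
  also have "\<dots> = (\<Sum>a\<in>?S. scal (Poly_Mapping.lookup v a) (f a))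
                 + (\<Sum>a\<in>?S. scal (Poly_Mapping.lookup w a) (f a))"
    by (simp add: lookup_add scal_add_left sum.distrib)
  also have "\<dots> = lin_ext f v + lin_ext f w"
    by (simp add: lin_ext_superset[symmetric])
  finally show ?thesis .
qed

lemma lin_ext_scal: "lin_ext f (scal c v) = scal c (lin_ext f v)"
proof -
  have "lin_ext f (scal c v) = (\<Sum>a\<in>Poly_Mapping.keys v. scal (Poly_Mapping.lookup (scal c v) a) (f a))"
    by (rule lin_ext_superset) (auto simp: keys_scal[THEN subsetD])
  then show ?thesis by (simp add: lin_ext_def scal_sum)
qed

lemma lin_ext_zero [simp]: "lin_ext f 0 = 0"
  by (simp add: lin_ext_def)

lemma lin_ext_single [simp]: "lin_ext f (Poly_Mapping.single a c) = scal c (f a)"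
  by (cases "c = 0") (simp_all add: lin_ext_def)

lemma lin_ext_cong: "(\<And>a. a \<in> Poly_Mapping.keys v \<Longrightarrow> f a = g a) \<Longrightarrow> lin_ext f v = lin_ext g v"
  by (simp add: lin_ext_def)

lemma lin_ext_fadd: "lin_ext (\<lambda>a. f a + g a) v = lin_ext f v + lin_ext g v"
  by (simp add: lin_ext_def scal_add_right sum.distrib)
lemma lin_ext_fdiff: "lin_ext (\<lambda>a. f a - g a) v = lin_ext f v - lin_ext g v"
  by (simp add: lin_ext_def scal_diff_right sum_subtractf)
lemma lin_ext_fzero [simp]: "lin_ext (\<lambda>a. 0) v = 0"
  by (simp add: lin_ext_def)
lemma lin_ext_fscal: "lin_ext (\<lambda>a. scal c (f a)) v = scal c (lin_ext f v)"
  by (simp add: lin_ext_def scal_sum mult.commute)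

lemma lin_ext_basis: "lin_ext (\<lambda>a. Poly_Mapping.single a 1) v = v"
proof (rule poly_mapping_eqI)
  fix x
  show "Poly_Mapping.lookup (lin_ext (\<lambda>a. Poly_Mapping.single a 1) v) x = Poly_Mapping.lookup v x"
    unfolding lin_ext_def lookup_sum
    by (cases "x \<in> Poly_Mapping.keys v")
       (auto simp: lookup_single when_def in_keys_iff sum.delta cong: sum.cong)
qed

lemma lin_ext_swap: "lin_ext (\<lambda>a. lin_ext (\<lambda>b. F a b) w) v = lin_ext (\<lambda>b. lin_ext (\<lambda>a. F a b) v) w"
  unfolding lin_ext_def scal_sum
  by (subst sum.swap) (simp add: mult.commute)

lemma keys_sum_subset: "Poly_Mapping.keys (sum f S) \<subseteq> (\<Union>x\<in>S. Poly_Mapping.keys (f x))"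
proof (induction S rule: infinite_finite_induct)
  case (insert x F)
  have "Poly_Mapping.keys (sum f (insert x F)) = Poly_Mapping.keys (f x + sum f F)"
    using insert by simp
  also have "\<dots> \<subseteq> Poly_Mapping.keys (f x) \<union> Poly_Mapping.keys (sum f F)"
    by (rule keys_add)
  finally show ?case using insert.IH by blast
qed simp_all

lemma keys_lin_ext: "Poly_Mapping.keys (lin_ext f v) \<subseteq> (\<Union>a\<in>Poly_Mapping.keys v. Poly_Mapping.keys (f a))"
proof
  fix w assume "w \<in> Poly_Mapping.keys (lin_ext f v)"
  then have "w \<in> (\<Union>a\<in>Poly_Mapping.keys v. Poly_Mapping.keys (scal (Poly_Mapping.lookup v a) (f a)))"
    unfolding lin_ext_def by (rule subsetD[OF keys_sum_subset])
  then obtain a where "a \<in> Poly_Mapping.keys v"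
    and "w \<in> Poly_Mapping.keys (scal (Poly_Mapping.lookup v a) (f a))"
    by (rule UN_E)
  then show "w \<in> (\<Union>a\<in>Poly_Mapping.keys v. Poly_Mapping.keys (f a))"
    using keys_scal[of "Poly_Mapping.lookup v a" "f a"] by blast
qed

lemma in_keys_lin_ext:
  assumes "w \<in> Poly_Mapping.keys (lin_ext f v)"
  obtains a where "a \<in> Poly_Mapping.keys v" "w \<in> Poly_Mapping.keys (f a)"
  using subsetD[OF keys_lin_ext assms] by blast

lemma klinearI: "(\<And>p r. f (p + r) = f p + f r) \<Longrightarrow> (\<And>c p. f (scal c p) = scal c (f p)) \<Longrightarrow> klinear f"
  by (simp add: klinear_def)

lemma klinear_add: "klinear f \<Longrightarrow> f (p + r) = f p + f r"
  by (simp add: klinear_def)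
lemma klinear_scal: "klinear f \<Longrightarrow> f (scal c p) = scal c (f p)"
  by (simp add: klinear_def)
lemma klinear_zero: "klinear f \<Longrightarrow> f 0 = 0"
  using klinear_scal[of f 0 0] by simp
lemma klinear_diff:
  assumes "klinear f"
  shows "f (p - r) = f p - f r"
proof -
  have "f (p - r) + f r = f p"
    by (metis assms klinear_add diff_add_cancel)
  then show ?thesis by (simp add: eq_diff_eq)
qed
lemma klinear_sum: "klinear f \<Longrightarrow> f (sum g S) = (\<Sum>x\<in>S. f (g x))"
  by (induction S rule: infinite_finite_induct) (simp_all add: klinear_zero klinear_add)

lemma klinear_id: "klinear (\<lambda>x. x)"
  by (rule klinearI) simp_all
lemma klinear_comp: "klinear f \<Longrightarrow> klinear g \<Longrightarrow> klinear (\<lambda>x. f (g x))"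
  by (simp add: klinear_def)
lemma klinear_fadd: "klinear F \<Longrightarrow> klinear G \<Longrightarrow> klinear (\<lambda>x. F x + G x)"
  by (simp add: klinear_def scal_add_right algebra_simps)
lemma klinear_fdiff: "klinear F \<Longrightarrow> klinear G \<Longrightarrow> klinear (\<lambda>x. F x - G x)"
  by (simp add: klinear_def scal_diff_right algebra_simps)

lemma klinear_lin_ext: "klinear (lin_ext f)"
  by (rule klinearI) (simp_all add: lin_ext_add lin_ext_scal)

lemma klinear_lin_ext_family:
  assumes "\<And>\<nu>. klinear (F \<nu>)"
  shows "klinear (\<lambda>b. lin_ext (\<lambda>\<nu>. F \<nu> b) y)"
  by (rule klinearI) (simp_all add: klinear_add[OF assms] klinear_scal[OF assms] lin_ext_fadd lin_ext_fscal)

lemma klinear_lin_ext_comm: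
  assumes "klinear F"
  shows "F (lin_ext f v) = lin_ext (\<lambda>a. F (f a)) v"
  by (simp add: lin_ext_def klinear_sum[OF assms] klinear_scal[OF assms])

lemma lin_ext_sum: "lin_ext f (sum g S) = (\<Sum>x\<in>S. lin_ext f (g x))"
  by (rule klinear_sum[OF klinear_lin_ext])
lemma lin_ext_lin_ext: "lin_ext f (lin_ext g v) = lin_ext (\<lambda>a. lin_ext f (g a)) v"
  by (rule klinear_lin_ext_comm[OF klinear_lin_ext])

lemma klinear_eq_lin_ext: "klinear F \<Longrightarrow> F v = lin_ext (\<lambda>a. F (Poly_Mapping.single a 1)) v"
  using klinear_lin_ext_comm[of F "\<lambda>a. Poly_Mapping.single a 1" v] by (simp add: lin_ext_basis)

lemma klinear_eq_on_keys:
  assumes "klinear F" "klinear G"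
    and "\<And>w. w \<in> Poly_Mapping.keys v \<Longrightarrow> F (Poly_Mapping.single w 1) = G (Poly_Mapping.single w 1)"
  shows "F v = G v"
  using klinear_eq_lin_ext[OF assms(1), of v] klinear_eq_lin_ext[OF assms(2), of v]
    lin_ext_cong[of v, OF assms(3)]
  by simp

lemma lbr_lin_ext: "lbr c u v = lin_ext (\<lambda>i. lin_ext (\<lambda>j. c i j) v) u"
  by (simp add: lbr_def lin_ext_def scal_sum)

lemma lbr_add_left: "lbr c (x + y) z = lbr c x z + lbr c y z"
  by (simp add: lbr_lin_ext lin_ext_add)
lemma lbr_add_right: "lbr c z (x + y) = lbr c z x + lbr c z y"
  by (simp add: lbr_lin_ext lin_ext_add lin_ext_fadd)
lemma lbr_scal_right: "lbr c z (scal a x) = scal a (lbr c z x)"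
  by (simp add: lbr_lin_ext lin_ext_scal lin_ext_fscal)
lemma lbr_basis: "lbr c (Poly_Mapping.single a 1) (Poly_Mapping.single b 1) = c a b"
  by (simp add: lbr_lin_ext)

lemma lbr_antisym:
  assumes "is_lie_bracket c"
  shows "lbr c x y = - lbr c y x"
proof -
  have "lbr c (x + y) (x + y) = 0" "lbr c x x = 0" "lbr c y y = 0"
    using assms by (simp_all add: is_lie_bracket_def)
  then have "lbr c x y + lbr c y x = 0"
    by (simp add: lbr_add_left lbr_add_right add.commute)
  then show ?thesis by (simp add: eq_neg_iff_add_eq_0)
qed

lemma structure_antisym: "is_lie_bracket c \<Longrightarrow> c a b = - c b a"
  using lbr_antisym[of c "Poly_Mapping.single a 1" "Poly_Mapping.single b 1"] by (simp add: lbr_basis)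

lemma structure_diag: "is_lie_bracket c \<Longrightarrow> c a a = 0"
  unfolding is_lie_bracket_def by (metis lbr_basis)

lemma lbr_uminus_right: "lbr c z (- x) = - lbr c z x"
proof -
  have "lbr c z (- x) + lbr c z x = lbr c z 0"
    by (simp add: lbr_add_right[symmetric])
  then show ?thesis by (simp add: lbr_lin_ext eq_neg_iff_add_eq_0)
qed

(* the Jacobi identity in the form it is consumed by the PBW induction *)
lemma jacobi_rearranged:
  assumes "is_lie_bracket c"
  shows "lbr c x (lbr c y z) + lbr c (lbr c y x) z + lbr c y (lbr c z x) = 0"
proof -
  have "lbr c (lbr c y x) z = lbr c z (lbr c x y)"
    using lbr_antisym[OF assms, of "lbr c y x" z] lbr_antisym[OF assms, of y x]
    by (simp add: lbr_uminus_right)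
  then show ?thesis
    using assms by (simp add: is_lie_bracket_def algebra_simps)
qed

(* rescaling a Lie bracket by a constant gives a Lie bracket: needed for the bracket c/k *)
lemma lie_bracket_scaled:
  assumes "is_lie_bracket c"
  shows "is_lie_bracket (\<lambda>i j. scal d (c i j))"
proof -
  have scaled: "lbr (\<lambda>i j. scal d (c i j)) x y = scal d (lbr c x y)" for x y
    by (simp add: lbr_lin_ext lin_ext_fscal)
  have "scal d (scal d (lbr c x (lbr c y z))) + scal d (scal d (lbr c y (lbr c z x)))
        + scal d (scal d (lbr c z (lbr c x y)))
      = scal (d * d) (lbr c x (lbr c y z) + lbr c y (lbr c z x) + lbr c z (lbr c x y))" for x y z
    by (simp add: scal_add_right)
  then show ?thesis
    using assms by (simp add: is_lie_bracket_def scaled lbr_scal_right)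
qed

section \<open>The PBW action of a basis element on sorted monomials\<close>

text \<open>A sorted index list s stands for the PBW monomial x_s of U(L).  The element
  pbw c l s is x_l \<cdot> x_s rewritten in the PBW basis: if l \<le> min s it is the monomial
  l#s, and if s = m#t with m < l it is computed by the straightening rule
  x_l x_m x_t = x_m (x_l x_t) + [x_l, x_m] x_t.
  The recursion is nested (it acts with x_m on the output of x_l), so it is defined with an
  explicit fuel argument; fuel length s + 1 suffices (lemma pbw_fuel_stable_and_shape).\<close>

primrec pbw_fuel :: "nat \<Rightarrow> ('j::linorder \<Rightarrow> 'j \<Rightarrow> ('j \<Rightarrow>\<^sub>0 'k::comm_ring_1)) \<Rightarrow> 'j \<Rightarrow> 'j list \<Rightarrow> ('j list \<Rightarrow>\<^sub>0 'k)"
where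
  "pbw_fuel 0 c l s = Poly_Mapping.single (l # s) 1"
| "pbw_fuel (Suc n) c l s =
     (if sorted (l # s) then Poly_Mapping.single (l # s) 1 else
      (case s of
        [] \<Rightarrow> Poly_Mapping.single [l] 1
      | m # t \<Rightarrow>
          lin_ext (\<lambda>w. if sorted (m # w) then Poly_Mapping.single (m # w) 1 else pbw_fuel n c m w)
            (pbw_fuel n c l t)
          + lin_ext (\<lambda>\<nu>. pbw_fuel n c \<nu> t) (c l m)))"

definition pbw :: "('j::linorder \<Rightarrow> 'j \<Rightarrow> ('j \<Rightarrow>\<^sub>0 'k::comm_ring_1)) \<Rightarrow> 'j \<Rightarrow> 'j list \<Rightarrow> ('j list \<Rightarrow>\<^sub>0 'k)"
where "pbw c l s = pbw_fuel (Suc (length s)) c l s"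

definition pbw_straighten ::
  "('j::linorder \<Rightarrow> 'j \<Rightarrow> ('j \<Rightarrow>\<^sub>0 'k::comm_ring_1)) \<Rightarrow> 'j \<Rightarrow> 'j \<Rightarrow> 'j list \<Rightarrow> ('j list \<Rightarrow>\<^sub>0 'k)"
where
  "pbw_straighten c l m t =
     lin_ext (\<lambda>w. if sorted (m # w) then Poly_Mapping.single (m # w) 1 else pbw c m w) (pbw c l t)
     + lin_ext (\<lambda>\<nu>. pbw c \<nu> t) (c l m)"

text \<open>This guarantees that the nested
  recursive calls are on shorter monomials.\<close>

definition pbw_shape :: "'j::linorder \<Rightarrow> 'j list \<Rightarrow> ('j list \<Rightarrow>\<^sub>0 'k::comm_ring_1) \<Rightarrow> bool" where
  "pbw_shape l s p \<longleftrightarrow> (\<forall>w\<in>Poly_Mapping.keys p. sorted w \<and> length w \<le> Suc (length s) \<and>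
        (length w = Suc (length s) \<longrightarrow> set w \<subseteq> insert l (set s)))"

lemma pbw_shapeD:
  assumes "pbw_shape l s p" "w \<in> Poly_Mapping.keys p"
  shows "sorted w" "length w \<le> Suc (length s)"
    "length w = Suc (length s) \<Longrightarrow> set w \<subseteq> insert l (set s)"
  using assms unfolding pbw_shape_def by blast+

lemma pbw_fuel_sorted: "sorted (l # s) \<Longrightarrow> pbw_fuel (Suc n) c l s = Poly_Mapping.single (l # s) 1"
  by simp

lemma pbw_fuel_straighten:
  assumes "m < l"
  shows "pbw_fuel (Suc n) c l (m # t) =
     lin_ext (\<lambda>w. if sorted (m # w) then Poly_Mapping.single (m # w) 1 else pbw_fuel n c m w)
       (pbw_fuel n c l t)
     + lin_ext (\<lambda>\<nu>. pbw_fuel n c \<nu> t) (c l m)"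
proof -
  have "\<not> sorted (l # m # t)" using assms by (simp add: not_le)
  then show ?thesis by (simp only: pbw_fuel.simps(2) if_False list.case)
qed

declare pbw_fuel.simps(2) [simp del]

lemma pbw_sorted: "sorted (l # s) \<Longrightarrow> pbw c l s = Poly_Mapping.single (l # s) 1"
  unfolding pbw_def by (rule pbw_fuel_sorted)

lemma pbw_shape_unsorted_shorter:
  assumes "pbw_shape l t p" "w \<in> Poly_Mapping.keys p" "\<not> sorted (m # w)"
    and "m < l" "sorted (m # t)"
  shows "length w \<le> length t"
proof (rule ccontr)
  assume "\<not> length w \<le> length t"
  then have "length w = Suc (length t)" using pbw_shapeD(2)[OF assms(1,2)] by simp
  then have "sorted w" "set w \<subseteq> insert l (set t)" using pbw_shapeD[OF assms(1,2)] by blast+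
  then have "sorted (m # w)" using assms(4,5) by auto
  with assms(3) show False by simp
qed

lemma pbw_fuel_step:
  assumes ml: "m < l" and s: "sorted (m # t)" and n: "length t < n"
    and fuel: "\<And>s' l' n'. sorted s' \<Longrightarrow> length s' \<le> length t \<Longrightarrow> length s' < n' \<Longrightarrow>
                  pbw_fuel n' c l' s' = pbw c l' s'"
    and shape: "\<And>s' l'. sorted s' \<Longrightarrow> length s' \<le> length t \<Longrightarrow> pbw_shape l' s' (pbw c l' s')"
  shows "pbw_fuel (Suc n) c l (m # t) = pbw_straighten c l m t"
proof -
  have t: "sorted t" using s by simp
  have "lin_ext (\<lambda>w. if sorted (m # w) then Poly_Mapping.single (m # w) 1 else pbw_fuel n c m w) (pbw c l t)
      = lin_ext (\<lambda>w. if sorted (m # w) then Poly_Mapping.single (m # w) 1 else pbw c m w) (pbw c l t)"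
  proof (rule lin_ext_cong)
    fix w assume w: "w \<in> Poly_Mapping.keys (pbw c l t)"
    have "pbw_fuel n c m w = pbw c m w" if "\<not> sorted (m # w)"
    proof (rule fuel)
      show "sorted w" by (rule pbw_shapeD(1)[OF shape[OF t order.refl] w])
      show short: "length w \<le> length t"
        by (rule pbw_shape_unsorted_shorter[OF shape[OF t order.refl] w that ml s])
      with n show "length w < n" by simp
    qed
    then show "(if sorted (m # w) then Poly_Mapping.single (m # w) 1 else pbw_fuel n c m w) =
               (if sorted (m # w) then Poly_Mapping.single (m # w) 1 else pbw c m w)"
      by simp
  qed
  then show ?thesis
    using fuel[OF t order.refl n] by (simp add: pbw_fuel_straighten[OF ml] pbw_straighten_def)
qed

lemma pbw_straighten_shape:
  assumes ml: "m < l" and s: "sorted (m # t)"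
    and shape: "\<And>s' l'. sorted s' \<Longrightarrow> length s' \<le> length t \<Longrightarrow> pbw_shape l' s' (pbw c l' s')"
  shows "pbw_shape l (m # t) (pbw_straighten c l m t)"
  unfolding pbw_shape_def
proof
  have t: "sorted t" using s by simp
  fix w assume "w \<in> Poly_Mapping.keys (pbw_straighten c l m t)"
  then consider
      (first) u where "u \<in> Poly_Mapping.keys (pbw c l t)"
        "w \<in> Poly_Mapping.keys (if sorted (m # u) then Poly_Mapping.single (m # u) 1 else pbw c m u)"
    | (bracket) \<nu> where "w \<in> Poly_Mapping.keys (pbw c \<nu> t)"
  proof -
    from \<open>w \<in> _\<close> have "w \<in> Poly_Mapping.keys (lin_ext (\<lambda>w. if sorted (m # w)
          then Poly_Mapping.single (m # w) 1 else pbw c m w) (pbw c l t))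
        \<union> Poly_Mapping.keys (lin_ext (\<lambda>\<nu>. pbw c \<nu> t) (c l m))"
      unfolding pbw_straighten_def by (rule subsetD[OF keys_add])
    then show thesis
      by (elim UnE in_keys_lin_ext) (rule that; assumption)+
  qed
  then show "sorted w \<and> length w \<le> Suc (length (m # t)) \<and>
             (length w = Suc (length (m # t)) \<longrightarrow> set w \<subseteq> insert l (set (m # t)))"
  proof cases
    case (first u)
    note u = pbw_shapeD[OF shape[OF t order.refl] first(1)]
    show ?thesis
    proof (cases "sorted (m # u)")
      case True
      then show ?thesis using first(2) u by auto
    next
      case False
      have short: "length u \<le> length t"
        by (rule pbw_shape_unsorted_shorter[OF shape[OF t order.refl] first(1) False ml s])
      have "w \<in> Poly_Mapping.keys (pbw c m u)" using first(2) by (simp only: if_not_P[OF False])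
      then show ?thesis using pbw_shapeD[OF shape[OF u(1) short]] short by fastforce
    qed
  next
    case bracket
    then show ?thesis using pbw_shapeD[OF shape[OF t order.refl]] by fastforce
  qed
qed

lemma pbw_stable_and_shape_sorted:
  assumes "sorted (l # s)"
  shows "(\<forall>n. length s < n \<longrightarrow> pbw_fuel n c l s = pbw c l s) \<and> pbw_shape l s (pbw c l s)"
proof -
  have "pbw_fuel n c l s = pbw c l s" if n: "length s < n" for n
  proof -
    obtain n' where "n = Suc n'" using n by (cases n) auto
    then show ?thesis by (simp only: pbw_fuel_sorted[OF assms] pbw_sorted[OF assms])
  qed
  moreover have "pbw_shape l s (pbw c l s)"
    using assms by (simp add: pbw_sorted pbw_shape_def)
  ultimately show ?thesis by blast
qed

lemma pbw_fuel_stable_and_shape: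
  "sorted s \<Longrightarrow> (\<forall>l n. length s < n \<longrightarrow> pbw_fuel n c l s = pbw c l s) \<and> (\<forall>l. pbw_shape l s (pbw c l s))"
proof (induction "length s" arbitrary: s rule: less_induct)
  case less
  have claim: "(\<forall>n. length s < n \<longrightarrow> pbw_fuel n c l s = pbw c l s) \<and> pbw_shape l s (pbw c l s)" for l
  proof (cases "sorted (l # s)")
    case True
    then show ?thesis by (rule pbw_stable_and_shape_sorted)
  next
    case False
    then obtain m t where s: "s = m # t" and ml: "m < l"
      using less.prems by (cases s) (auto simp: not_le)
    have mt: "sorted (m # t)" using less.prems s by simp
    have IH: "(\<forall>l n. length s' < n \<longrightarrow> pbw_fuel n c l s' = pbw c l s') \<and> (\<forall>l. pbw_shape l s' (pbw c l s'))"
      if "sorted s'" "length s' \<le> length t" for s'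
      using less.hyps that s by simp
    have fuel: "pbw_fuel n' c l' s' = pbw c l' s'"
      if "sorted s'" "length s' \<le> length t" "length s' < n'" for s' l' n'
      using IH[OF that(1,2)] that(3) by blast
    have shape: "pbw_shape l' s' (pbw c l' s')" if "sorted s'" "length s' \<le> length t" for s' l'
      using IH[OF that] by blast
    have step: "pbw_fuel (Suc n) c l s = pbw_straighten c l m t" if "length t < n" for n
      unfolding s by (rule pbw_fuel_step[OF ml mt that fuel shape])
    have straighten: "pbw c l s = pbw_straighten c l m t"
      unfolding pbw_def by (rule step) (simp add: s)
    have "pbw_fuel n c l s = pbw c l s" if fuel_n: "length s < n" for n
    proof -
      obtain n' where n: "n = Suc n'" using fuel_n by (cases n) auto
      then have "length t < n'" using fuel_n s by simp
      then show ?thesis unfolding n straighten by (rule step)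
    qed
    moreover have "pbw_shape l s (pbw c l s)"
      unfolding straighten unfolding s by (rule pbw_straighten_shape[OF ml mt shape])
    ultimately show ?thesis by blast
  qed
  then show ?case by blast
qed

lemma pbw_shape: "sorted s \<Longrightarrow> pbw_shape l s (pbw c l s)"
  using pbw_fuel_stable_and_shape by blast

lemma pbw_keys_sorted: "sorted s \<Longrightarrow> w \<in> Poly_Mapping.keys (pbw c l s) \<Longrightarrow> sorted w"
  using pbw_shapeD(1)[OF pbw_shape] by blast

lemma pbw_straightening:
  assumes "m < l" "sorted (m # t)"
  shows "pbw c l (m # t) = pbw_straighten c l m t"
proof -
  have "pbw_fuel (Suc (Suc (length t))) c l (m # t) = pbw_straighten c l m t"
    by (rule pbw_fuel_step[OF assms lessI]) (use pbw_fuel_stable_and_shape in blast)+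
  then show ?thesis by (simp add: pbw_def)
qed

section \<open>The PBW representation of L on the symmetric monomials\<close>

text \<open>pbw_rep c l is the linear operator x_l on S (the span of the sorted lists;
  unsorted lists are sent to 0), and pbw_rep_elem c x the operator of an arbitrary
  element x of L.\<close>

definition pbw_rep :: "('j::linorder \<Rightarrow> 'j \<Rightarrow> ('j \<Rightarrow>\<^sub>0 'k::comm_ring_1)) \<Rightarrow> 'j \<Rightarrow> ('j list \<Rightarrow>\<^sub>0 'k) \<Rightarrow> ('j list \<Rightarrow>\<^sub>0 'k)"
where "pbw_rep c l v = lin_ext (\<lambda>s. if sorted s then pbw c l s else 0) v"

definition pbw_rep_elem ::
  "('j::linorder \<Rightarrow> 'j \<Rightarrow> ('j \<Rightarrow>\<^sub>0 'k::comm_ring_1)) \<Rightarrow> ('j \<Rightarrow>\<^sub>0 'k) \<Rightarrow> ('j list \<Rightarrow>\<^sub>0 'k) \<Rightarrow> ('j list \<Rightarrow>\<^sub>0 'k)"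
where "pbw_rep_elem c x v = lin_ext (\<lambda>\<nu>. pbw_rep c \<nu> v) x"

lemma klinear_pbw_rep: "klinear (pbw_rep c l)"
  unfolding pbw_rep_def[abs_def] by (rule klinear_lin_ext)

lemma klinear_pbw_rep_elem: "klinear (pbw_rep_elem c x)"
  unfolding pbw_rep_elem_def[abs_def] by (rule klinear_lin_ext_family) (rule klinear_pbw_rep)

lemma pbw_rep_single: "pbw_rep c l (Poly_Mapping.single s 1) = (if sorted s then pbw c l s else 0)"
  by (simp add: pbw_rep_def)

lemma pbw_rep_elem_basis: "pbw_rep_elem c (Poly_Mapping.single a 1) v = pbw_rep c a v"
  by (simp add: pbw_rep_elem_def)

lemma pbw_rep_elem_add: "pbw_rep_elem c (x + y) v = pbw_rep_elem c x v + pbw_rep_elem c y v"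
  by (simp add: pbw_rep_elem_def lin_ext_add)

lemma pbw_rep_elem_zero [simp]: "pbw_rep_elem c 0 v = 0"
  by (simp add: pbw_rep_elem_def)

lemma pbw_rep_elem_uminus: "pbw_rep_elem c (- x) v = - pbw_rep_elem c x v"
proof -
  have "pbw_rep_elem c (- x) v + pbw_rep_elem c x v = 0"
    by (simp add: pbw_rep_elem_add[symmetric])
  then show ?thesis by (simp add: eq_neg_iff_add_eq_0)
qed

lemma pbw_rep_straighten:
  assumes "sorted (m # t)" "m < l"
  shows "pbw_rep c l (pbw_rep c m (Poly_Mapping.single t 1))
       = pbw_rep c m (pbw_rep c l (Poly_Mapping.single t 1)) + pbw_rep_elem c (c l m) (Poly_Mapping.single t 1)"
proof -
  have t: "sorted t" using assms by simp
  have "pbw_rep c m (pbw c l t)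
      = lin_ext (\<lambda>w. if sorted (m # w) then Poly_Mapping.single (m # w) 1 else pbw c m w) (pbw c l t)"
    unfolding pbw_rep_def
  proof (rule lin_ext_cong)
    fix w assume "w \<in> Poly_Mapping.keys (pbw c l t)"
    then have w: "sorted w" by (rule pbw_keys_sorted[OF t])
    show "(if sorted w then pbw c m w else 0)
        = (if sorted (m # w) then Poly_Mapping.single (m # w) 1 else pbw c m w)"
    proof (cases "sorted (m # w)")
      case True
      then show ?thesis using w by (simp add: pbw_sorted)
    next
      case False
      then show ?thesis by (simp only: if_P[OF w] if_not_P[OF False] if_False)
    qed
  qed
  moreover have "pbw_rep_elem c (c l m) (Poly_Mapping.single t 1) = lin_ext (\<lambda>\<nu>. pbw c \<nu> t) (c l m)"
    unfolding pbw_rep_elem_def by (rule lin_ext_cong) (simp add: pbw_rep_single t)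
  ultimately show ?thesis
    using assms t by (simp add: pbw_rep_single pbw_sorted pbw_straightening pbw_straighten_def)
qed

definition pbw_commutes :: "('j::linorder \<Rightarrow> 'j \<Rightarrow> ('j \<Rightarrow>\<^sub>0 'k::comm_ring_1)) \<Rightarrow> ('j list \<Rightarrow>\<^sub>0 'k) \<Rightarrow> bool"
where
  "pbw_commutes c v \<longleftrightarrow>
     (\<forall>a b. pbw_rep c a (pbw_rep c b v) - pbw_rep c b (pbw_rep c a v) = pbw_rep_elem c (c a b) v)"

lemma klinear_pbw_commutator: "klinear (\<lambda>v. pbw_rep c a (pbw_rep c b v) - pbw_rep c b (pbw_rep c a v))"
  by (rule klinear_fdiff; rule klinear_comp[OF klinear_pbw_rep klinear_pbw_rep])

lemma pbw_commutes_by_keys: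
  assumes "\<And>w. w \<in> Poly_Mapping.keys v \<Longrightarrow> pbw_commutes c (Poly_Mapping.single w 1)"
  shows "pbw_commutes c v"
  unfolding pbw_commutes_def
proof (intro allI)
  fix a b
  show "pbw_rep c a (pbw_rep c b v) - pbw_rep c b (pbw_rep c a v) = pbw_rep_elem c (c a b) v"
    by (rule klinear_eq_on_keys[OF klinear_pbw_commutator klinear_pbw_rep_elem])
       (use assms in \<open>simp add: pbw_commutes_def\<close>)
qed

lemma pbw_commutes_unsorted: "\<not> sorted w \<Longrightarrow> pbw_commutes c (Poly_Mapping.single w 1)"
  by (simp add: pbw_commutes_def pbw_rep_single pbw_rep_elem_def klinear_zero[OF klinear_pbw_rep])

lemma pbw_commutes_elem:
  assumes "pbw_commutes c v"
  shows "pbw_rep_elem c x (pbw_rep_elem c y v) - pbw_rep_elem c y (pbw_rep_elem c x v)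
       = pbw_rep_elem c (lbr c x y) v"
proof -
  have lhs1: "pbw_rep_elem c x (pbw_rep_elem c y v) = lin_ext (\<lambda>a. lin_ext (\<lambda>b. pbw_rep c a (pbw_rep c b v)) y) x"
    unfolding pbw_rep_elem_def by (intro lin_ext_cong klinear_lin_ext_comm[OF klinear_pbw_rep])
  have "pbw_rep_elem c y (pbw_rep_elem c x v) = lin_ext (\<lambda>b. lin_ext (\<lambda>a. pbw_rep c b (pbw_rep c a v)) x) y"
    unfolding pbw_rep_elem_def by (intro lin_ext_cong klinear_lin_ext_comm[OF klinear_pbw_rep])
  also have "\<dots> = lin_ext (\<lambda>a. lin_ext (\<lambda>b. pbw_rep c b (pbw_rep c a v)) y) x"
    by (rule lin_ext_swap[symmetric])
  finally have lhs2: "pbw_rep_elem c y (pbw_rep_elem c x v)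
      = lin_ext (\<lambda>a. lin_ext (\<lambda>b. pbw_rep c b (pbw_rep c a v)) y) x" .
  have "pbw_rep_elem c (lbr c x y) v = lin_ext (\<lambda>a. lin_ext (\<lambda>\<nu>. pbw_rep c \<nu> v) (lin_ext (\<lambda>b. c a b) y)) x"
    by (simp only: pbw_rep_elem_def lbr_lin_ext lin_ext_lin_ext)
  also have "\<dots> = lin_ext (\<lambda>a. lin_ext (\<lambda>b. pbw_rep_elem c (c a b) v) y) x"
    by (simp only: lin_ext_lin_ext pbw_rep_elem_def)
  finally have rhs: "pbw_rep_elem c (lbr c x y) v = lin_ext (\<lambda>a. lin_ext (\<lambda>b. pbw_rep_elem c (c a b) v) y) x" .
  from assms have "pbw_rep c a (pbw_rep c b v) - pbw_rep c b (pbw_rep c a v) = pbw_rep_elem c (c a b) v" for a b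
    by (simp add: pbw_commutes_def)
  then show ?thesis
    unfolding lhs1 lhs2 rhs by (simp add: lin_ext_fdiff[symmetric])
qed

text \<open>The commutation relation on a monomial x_\<nu> x_\<Psi> with \<nu> below both indices is proved
  by moving x_\<nu> to the front, using the relation for shorter monomials (the hypothesis
  shorter), and closing with the Jacobi identity.\<close>

lemma pbw_commutator_past_first:
  assumes s: "sorted (\<nu> # \<Psi>)" and a: "\<nu> < a" and b: "\<nu> < b"
    and shorter: "\<And>w. sorted w \<Longrightarrow> length w < length (\<nu> # \<Psi>) \<Longrightarrow> pbw_commutes c (Poly_Mapping.single w 1)"
  shows "pbw_rep c a (pbw_rep c \<nu> (pbw_rep c b (Poly_Mapping.single \<Psi> 1)))
           - pbw_rep c \<nu> (pbw_rep c a (pbw_rep c b (Poly_Mapping.single \<Psi> 1)))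
         = pbw_rep_elem c (c a \<nu>) (pbw_rep c b (Poly_Mapping.single \<Psi> 1))"
proof (rule klinear_eq_on_keys[OF klinear_pbw_commutator klinear_pbw_rep_elem])
  have \<Psi>: "sorted \<Psi>" using s by simp
  fix w assume "w \<in> Poly_Mapping.keys (pbw_rep c b (Poly_Mapping.single \<Psi> 1))"
  then have w: "w \<in> Poly_Mapping.keys (pbw c b \<Psi>)" using \<Psi> by (simp add: pbw_rep_single)
  note shape = pbw_shapeD[OF pbw_shape[OF \<Psi>] w]
  show "pbw_rep c a (pbw_rep c \<nu> (Poly_Mapping.single w 1)) - pbw_rep c \<nu> (pbw_rep c a (Poly_Mapping.single w 1))
      = pbw_rep_elem c (c a \<nu>) (Poly_Mapping.single w 1)"
  proof (cases "sorted (\<nu> # w)")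
    case True
    then show ?thesis by (simp only: pbw_rep_straighten[OF True a] add_diff_cancel_left')
  next
    case False
    have "length w < length (\<nu> # \<Psi>)"
    proof (rule ccontr)
      assume "\<not> length w < length (\<nu> # \<Psi>)"
      then have "set w \<subseteq> insert b (set \<Psi>)" using shape by simp
      then have "sorted (\<nu> # w)" using shape(1) s b by auto
      with False show False by simp
    qed
    then show ?thesis using shorter[OF shape(1)] by (simp add: pbw_commutes_def)
  qed
qed

lemma pbw_rep_move_first:
  assumes s: "sorted (\<nu> # \<Psi>)" and a: "\<nu> < a" and b: "\<nu> < b"
    and shorter: "\<And>w. sorted w \<Longrightarrow> length w < length (\<nu> # \<Psi>) \<Longrightarrow> pbw_commutes c (Poly_Mapping.single w 1)"
  shows "pbw_rep c a (pbw_rep c b (Poly_Mapping.single (\<nu> # \<Psi>) 1))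
       = pbw_rep c \<nu> (pbw_rep c a (pbw_rep c b (Poly_Mapping.single \<Psi> 1)))
         + pbw_rep_elem c (c a \<nu>) (pbw_rep c b (Poly_Mapping.single \<Psi> 1))
         + pbw_rep c a (pbw_rep_elem c (c b \<nu>) (Poly_Mapping.single \<Psi> 1))"
proof -
  let ?w = "Poly_Mapping.single \<Psi> 1"
  have \<Psi>: "sorted \<Psi>" using s by simp
  have z: "Poly_Mapping.single (\<nu> # \<Psi>) 1 = pbw_rep c \<nu> ?w" using s by (simp add: pbw_rep_single pbw_sorted)
  have "pbw_commutes c ?w" using shorter[OF \<Psi>] by simp
  then have "pbw_rep c b (Poly_Mapping.single (\<nu> # \<Psi>) 1) = pbw_rep c \<nu> (pbw_rep c b ?w) + pbw_rep_elem c (c b \<nu>) ?w"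
    unfolding z pbw_commutes_def by (metis diff_eq_eq add.commute)
  then have "pbw_rep c a (pbw_rep c b (Poly_Mapping.single (\<nu> # \<Psi>) 1))
      = pbw_rep c a (pbw_rep c \<nu> (pbw_rep c b ?w)) + pbw_rep c a (pbw_rep_elem c (c b \<nu>) ?w)"
    by (simp add: klinear_add[OF klinear_pbw_rep])
  then show ?thesis
    using pbw_commutator_past_first[OF s a b shorter] by (metis diff_eq_eq add.commute)
qed

lemma pbw_commutator_descend:
  assumes lie: "is_lie_bracket c"
    and s: "sorted (\<nu> # \<Psi>)" and l: "\<nu> < l" and m: "\<nu> < m"
    and shorter: "\<And>w. sorted w \<Longrightarrow> length w < length (\<nu> # \<Psi>) \<Longrightarrow> pbw_commutes c (Poly_Mapping.single w 1)"
  shows "pbw_rep c l (pbw_rep c m (Poly_Mapping.single (\<nu> # \<Psi>) 1))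
         - pbw_rep c m (pbw_rep c l (Poly_Mapping.single (\<nu> # \<Psi>) 1))
       = pbw_rep_elem c (c l m) (Poly_Mapping.single (\<nu> # \<Psi>) 1)"
proof -
  let ?w = "Poly_Mapping.single \<Psi> 1"
  have \<Psi>: "sorted \<Psi>" using s by simp
  have comm: "pbw_commutes c ?w" using shorter[OF \<Psi>] by simp
  have z: "Poly_Mapping.single (\<nu> # \<Psi>) 1 = pbw_rep c \<nu> ?w" using s by (simp add: pbw_rep_single pbw_sorted)
  have front: "pbw_rep c \<nu> (pbw_rep c l (pbw_rep c m ?w)) - pbw_rep c \<nu> (pbw_rep c m (pbw_rep c l ?w))
      = pbw_rep c \<nu> (pbw_rep_elem c (c l m) ?w)"
    using comm unfolding pbw_commutes_def by (simp add: klinear_diff[OF klinear_pbw_rep, symmetric])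
  (* the remaining terms are commutators of elements of L acting on x_\<Psi> *)
  define el where "el = (Poly_Mapping.single l 1 :: 'a \<Rightarrow>\<^sub>0 'b)"
  define em where "em = (Poly_Mapping.single m 1 :: 'a \<Rightarrow>\<^sub>0 'b)"
  define en where "en = (Poly_Mapping.single \<nu> 1 :: 'a \<Rightarrow>\<^sub>0 'b)"
  have basis: "pbw_rep c l = pbw_rep_elem c el" "pbw_rep c m = pbw_rep_elem c em"
    "pbw_rep c \<nu> = pbw_rep_elem c en"
    by (auto simp: el_def em_def en_def pbw_rep_elem_basis)
  have brackets: "c l m = lbr c el em" "c l \<nu> = lbr c el en" "c m \<nu> = lbr c em en"
    by (simp_all add: el_def em_def en_def lbr_basis)
  have jacobi: "pbw_rep_elem c (lbr c en (c l m)) ?w + pbw_rep_elem c (lbr c (c l \<nu>) em) ?w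
      + pbw_rep_elem c (lbr c el (c m \<nu>)) ?w = 0"
    using jacobi_rearranged[OF lie, of en el em] brackets
    by (metis pbw_rep_elem_add pbw_rep_elem_zero)
  show ?thesis
    using pbw_rep_move_first[OF s l m shorter] pbw_rep_move_first[OF s m l shorter] front jacobi z
      pbw_commutes_elem[OF comm, of en "c l m"] pbw_commutes_elem[OF comm, of "c l \<nu>" em]
      pbw_commutes_elem[OF comm, of el "c m \<nu>"]
    unfolding basis by (simp add: algebra_simps)
qed

lemma commutator_cases:
  fixes l m :: "'j::linorder"
  assumes t: "sorted t"
  obtains "l = m" | "m < l" "sorted (m # t)" | "l < m" "sorted (l # t)"
    | \<nu> \<Psi> where "t = \<nu> # \<Psi>" "\<nu> < l" "\<nu> < m"
proof -
  have prepend_or_below: "sorted (x # t) \<or> (\<exists>\<nu> \<Psi>. t = \<nu> # \<Psi> \<and> \<nu> < x)" for x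
  proof (cases t)
    case (Cons \<nu> \<Psi>)
    then show ?thesis using t by (cases "x \<le> \<nu>") (auto intro: order_trans)
  qed simp
  consider "l = m" | "m < l" | "l < m" by (rule linorder_cases[of l m]) auto
  then show ?thesis
  proof cases
    case 2
    then show ?thesis using prepend_or_below[of m] that(2,4) by (auto intro: less_trans)
  next
    case 3
    then show ?thesis using prepend_or_below[of l] that(3,4) by (auto intro: less_trans)
  qed (rule that(1))
qed

lemma pbw_commutes_monomial:
  assumes lie: "is_lie_bracket c"
  shows "sorted t \<Longrightarrow> pbw_commutes c (Poly_Mapping.single t 1)"
proof (induction "length t" arbitrary: t rule: less_induct)
  case less
  let ?z = "Poly_Mapping.single t 1"
  show ?case unfolding pbw_commutes_def
  proof (intro allI)
    fix l m
    from less.prems show "pbw_rep c l (pbw_rep c m ?z) - pbw_rep c m (pbw_rep c l ?z) = pbw_rep_elem c (c l m) ?z"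
    proof (cases rule: commutator_cases[where l = l and m = m])
      case 1
      then show ?thesis using structure_diag[OF lie] by simp
    next
      case 2
      then show ?thesis by (simp only: pbw_rep_straighten[OF 2(2,1)] add_diff_cancel_left')
    next
      case 3
      then show ?thesis
        using pbw_rep_straighten[OF 3(2,1), where c = c] structure_antisym[OF lie, of m l]
        by (simp add: pbw_rep_elem_uminus)
    next
      case (4 \<nu> \<Psi>)
      then show ?thesis
        using pbw_commutator_descend[OF lie _ 4(2,3), of \<Psi>] less by simp
    qed
  qed
qed

theorem pbw_representation:
  assumes "is_lie_bracket c"
  shows "pbw_commutes c v"
  by (rule pbw_commutes_by_keys) (metis pbw_commutes_monomial[OF assms] pbw_commutes_unsorted)

definition tens :: "('a \<Rightarrow>\<^sub>0 'k::comm_ring_1) \<Rightarrow> ('b \<Rightarrow>\<^sub>0 'k) \<Rightarrow> (('a \<times> 'b) \<Rightarrow>\<^sub>0 'k)" where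
  "tens p r = lin_ext (\<lambda>u. lin_ext (\<lambda>w. Poly_Mapping.single (u, w) 1) r) p"

lemma klinear_tens_left: "klinear (\<lambda>p. tens p r)"
  unfolding tens_def by (rule klinear_lin_ext)
lemma klinear_tens_right: "klinear (\<lambda>r. tens p r)"
  unfolding tens_def by (rule klinear_lin_ext_family) (rule klinear_lin_ext)

lemma tens_lin_ext_left: "tens (lin_ext f p) r = lin_ext (\<lambda>u. tens (f u) r) p"
  unfolding tens_def by (rule lin_ext_lin_ext)
lemma tens_lin_ext_right: "tens q (lin_ext f r) = lin_ext (\<lambda>w. tens q (f w)) r"
  by (rule klinear_lin_ext_comm[OF klinear_tens_right])
lemma tens_single: "tens (Poly_Mapping.single u a) (Poly_Mapping.single w b) = Poly_Mapping.single (u, w) (a * b)"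
  by (simp add: tens_def mult.commute)
lemma tens_single_left: "tens (Poly_Mapping.single u 1) r = lin_ext (\<lambda>w. Poly_Mapping.single (u, w) 1) r"
  by (simp add: tens_def)

definition pbw_rep_left ::
  "('j::linorder \<Rightarrow> 'j \<Rightarrow> ('j \<Rightarrow>\<^sub>0 'k::comm_ring_1)) \<Rightarrow> 'j \<Rightarrow> (('j list \<times> 'x) \<Rightarrow>\<^sub>0 'k) \<Rightarrow> (('j list \<times> 'x) \<Rightarrow>\<^sub>0 'k)"
where
  "pbw_rep_left c a b =
     lin_ext (\<lambda>uw. tens (pbw_rep c a (Poly_Mapping.single (fst uw) 1)) (Poly_Mapping.single (snd uw) 1)) b"

lemma klinear_pbw_rep_left: "klinear (pbw_rep_left c a)"
  unfolding pbw_rep_left_def[abs_def] by (rule klinear_lin_ext)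

lemma pbw_rep_left_tens: "pbw_rep_left c a (tens p r) = tens (pbw_rep c a p) r"
proof -
  have "pbw_rep_left c a (tens p r)
      = lin_ext (\<lambda>u. lin_ext (\<lambda>w. pbw_rep_left c a (Poly_Mapping.single (u, w) 1)) r) p"
    unfolding tens_def by (simp add: klinear_lin_ext_comm[OF klinear_pbw_rep_left])
  also have "\<dots> = lin_ext (\<lambda>u. tens (pbw_rep c a (Poly_Mapping.single u 1)) r) p"
    by (intro lin_ext_cong)
       (simp add: pbw_rep_left_def tens_lin_ext_right[symmetric] lin_ext_basis)
  also have "\<dots> = tens (pbw_rep c a p) r"
    by (simp add: tens_lin_ext_left[symmetric] klinear_eq_lin_ext[OF klinear_pbw_rep, symmetric])
  finally show ?thesis .
qed

lemma pbw_rep_left_commutator: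
  assumes "is_lie_bracket c"
  shows "pbw_rep_left c i (pbw_rep_left c j b) - pbw_rep_left c j (pbw_rep_left c i b)
       = lin_ext (\<lambda>\<nu>. pbw_rep_left c \<nu> b) (c i j)"
proof (rule klinear_eq_on_keys[of _ "\<lambda>b. lin_ext (\<lambda>\<nu>. pbw_rep_left c \<nu> b) (c i j)"])
  show "klinear (\<lambda>b. pbw_rep_left c i (pbw_rep_left c j b) - pbw_rep_left c j (pbw_rep_left c i b))"
    by (rule klinear_fdiff; rule klinear_comp[OF klinear_pbw_rep_left klinear_pbw_rep_left])
  show "klinear (\<lambda>b. lin_ext (\<lambda>\<nu>. pbw_rep_left c \<nu> b) (c i j))"
    by (rule klinear_lin_ext_family) (rule klinear_pbw_rep_left)
next
  fix uw :: "'a list \<times> 'c"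
  obtain u w where uw: "uw = (u, w)" by (cases uw)
  have basis: "Poly_Mapping.single (u, w) 1 = tens (Poly_Mapping.single u 1) (Poly_Mapping.single w 1)"
    by (simp add: tens_single)
  have "pbw_rep c i (pbw_rep c j (Poly_Mapping.single u 1)) - pbw_rep c j (pbw_rep c i (Poly_Mapping.single u 1))
      = pbw_rep_elem c (c i j) (Poly_Mapping.single u 1)"
    using pbw_representation[OF assms] by (simp add: pbw_commutes_def)
  then show "pbw_rep_left c i (pbw_rep_left c j (Poly_Mapping.single uw 1))
      - pbw_rep_left c j (pbw_rep_left c i (Poly_Mapping.single uw 1))
      = lin_ext (\<lambda>\<nu>. pbw_rep_left c \<nu> (Poly_Mapping.single uw 1)) (c i j)"
    unfolding uw basis
    by (simp add: pbw_rep_left_tens klinear_diff[OF klinear_tens_left, symmetric] pbw_rep_elem_def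
        tens_lin_ext_left)
qed

section \<open>The module M = S \<oplus> (S \<otimes> S) \<oplus> S\<close>

text \<open>The three summands correspond to the three kinds of model monomials: x_s (first),
  x_u x_{j0} \<tilde>q x_{js} (middle) and \<tilde>q x_s (last).\<close>

type_synonym 'j mod_index = "'j list + ('j list \<times> 'j list) + 'j list"

definition emb_c :: "('j list \<Rightarrow>\<^sub>0 'k::comm_ring_1) \<Rightarrow> ('j mod_index \<Rightarrow>\<^sub>0 'k)" where
  "emb_c a = lin_ext (\<lambda>u. Poly_Mapping.single (Inl u) 1) a"
definition emb_b :: "(('j list \<times> 'j list) \<Rightarrow>\<^sub>0 'k::comm_ring_1) \<Rightarrow> ('j mod_index \<Rightarrow>\<^sub>0 'k)" where
  "emb_b b = lin_ext (\<lambda>u. Poly_Mapping.single (Inr (Inl u)) 1) b"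
definition emb_a :: "('j list \<Rightarrow>\<^sub>0 'k::comm_ring_1) \<Rightarrow> ('j mod_index \<Rightarrow>\<^sub>0 'k)" where
  "emb_a g = lin_ext (\<lambda>u. Poly_Mapping.single (Inr (Inr u)) 1) g"

definition part_c :: "('j mod_index \<Rightarrow>\<^sub>0 'k::comm_ring_1) \<Rightarrow> ('j list \<Rightarrow>\<^sub>0 'k)" where
  "part_c v = lin_ext (\<lambda>x. case x of Inl u \<Rightarrow> Poly_Mapping.single u 1 | Inr _ \<Rightarrow> 0) v"
definition part_b :: "('j mod_index \<Rightarrow>\<^sub>0 'k::comm_ring_1) \<Rightarrow> (('j list \<times> 'j list) \<Rightarrow>\<^sub>0 'k)" where
  "part_b v = lin_ext (\<lambda>x. case x of Inr (Inl u) \<Rightarrow> Poly_Mapping.single u 1 | _ \<Rightarrow> 0) v"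
definition part_a :: "('j mod_index \<Rightarrow>\<^sub>0 'k::comm_ring_1) \<Rightarrow> ('j list \<Rightarrow>\<^sub>0 'k)" where
  "part_a v = lin_ext (\<lambda>x. case x of Inr (Inr u) \<Rightarrow> Poly_Mapping.single u 1 | _ \<Rightarrow> 0) v"

definition mvec :: "('j list \<Rightarrow>\<^sub>0 'k::comm_ring_1) \<Rightarrow> (('j list \<times> 'j list) \<Rightarrow>\<^sub>0 'k) \<Rightarrow> ('j list \<Rightarrow>\<^sub>0 'k)
    \<Rightarrow> ('j mod_index \<Rightarrow>\<^sub>0 'k)" where
  "mvec a b g = emb_c a + emb_b b + emb_a g"

lemma klinear_parts: "klinear part_c" "klinear part_b" "klinear part_a"
  unfolding part_c_def[abs_def] part_b_def[abs_def] part_a_def[abs_def] by (rule klinear_lin_ext)+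

lemma parts_emb [simp]:
  "part_c (emb_c a) = a" "part_b (emb_c a) = 0" "part_a (emb_c a) = 0"
  "part_c (emb_b b) = 0" "part_b (emb_b b) = b" "part_a (emb_b b) = 0"
  "part_c (emb_a g) = 0" "part_b (emb_a g) = 0" "part_a (emb_a g) = g"
  unfolding emb_c_def emb_b_def emb_a_def klinear_lin_ext_comm[OF klinear_parts(1)]
    klinear_lin_ext_comm[OF klinear_parts(2)] klinear_lin_ext_comm[OF klinear_parts(3)]
  by (simp_all add: part_c_def part_b_def part_a_def lin_ext_basis)

lemma parts_mvec [simp]: "part_c (mvec a b g) = a" "part_b (mvec a b g) = b" "part_a (mvec a b g) = g"
  by (simp_all add: mvec_def klinear_add[OF klinear_parts(1)] klinear_add[OF klinear_parts(2)]
      klinear_add[OF klinear_parts(3)])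

lemma mvec_parts: "mvec (part_c v) (part_b v) (part_a v) = v"
proof -
  have lin: "klinear (\<lambda>v. mvec (part_c v) (part_b v) (part_a v))"
    unfolding mvec_def emb_c_def[abs_def] emb_b_def[abs_def] emb_a_def[abs_def]
    by (intro klinear_fadd klinear_comp[OF klinear_lin_ext] klinear_parts)
  have "mvec (part_c v) (part_b v) (part_a v) = (\<lambda>v. v) v"
  proof (rule klinear_eq_on_keys[OF lin klinear_id])
    fix w :: "'a mod_index"
    show "mvec (part_c (Poly_Mapping.single w 1)) (part_b (Poly_Mapping.single w 1)) (part_a (Poly_Mapping.single w 1))
        = Poly_Mapping.single w 1"
      by (cases w rule: sum.exhaust[case_product sum.exhaust])
         (auto simp: mvec_def part_c_def part_b_def part_a_def emb_c_def emb_b_def emb_a_def split: sum.split)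
  qed
  then show ?thesis by simp
qed

lemma mod_eqI: "part_c v = part_c w \<Longrightarrow> part_b v = part_b w \<Longrightarrow> part_a v = part_a w \<Longrightarrow> v = w"
  by (metis mvec_parts)

section \<open>The action of T(V) on M\<close>

definition unit_mono :: "'j list \<Rightarrow>\<^sub>0 'k::comm_ring_1" where
  "unit_mono = Poly_Mapping.single [] 1"

definition q_op :: "('j mod_index \<Rightarrow>\<^sub>0 'k::comm_ring_1) \<Rightarrow> ('j mod_index \<Rightarrow>\<^sub>0 'k)" where
  "q_op v = emb_a (part_a v)"

definition x_op :: "('j::linorder \<Rightarrow> 'j \<Rightarrow> ('j \<Rightarrow>\<^sub>0 'k::comm_ring_1)) \<Rightarrow> ('j \<Rightarrow> 'j \<Rightarrow> ('j \<Rightarrow>\<^sub>0 'k))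
    \<Rightarrow> 'j \<Rightarrow> ('j mod_index \<Rightarrow>\<^sub>0 'k) \<Rightarrow> ('j mod_index \<Rightarrow>\<^sub>0 'k)" where
  "x_op c c' a v = mvec (pbw_rep c a (part_c v))
     (pbw_rep_left c a (part_b v) + tens unit_mono (pbw_rep c' a (part_a v))) (pbw_rep c' a (part_a v))"

lemma parts_q_op [simp]: "part_c (q_op v) = 0" "part_b (q_op v) = 0" "part_a (q_op v) = part_a v"
  by (simp_all add: q_op_def)

lemma parts_x_op [simp]:
  "part_c (x_op c c' a v) = pbw_rep c a (part_c v)"
  "part_b (x_op c c' a v) = pbw_rep_left c a (part_b v) + tens unit_mono (pbw_rep c' a (part_a v))"
  "part_a (x_op c c' a v) = pbw_rep c' a (part_a v)"
  by (simp_all add: x_op_def)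

lemma klinear_q_op: "klinear q_op"
  unfolding q_op_def[abs_def] emb_a_def[abs_def] by (rule klinear_comp[OF klinear_lin_ext klinear_parts(3)])

lemma klinear_x_op: "klinear (x_op c c' a)"
proof (rule klinearI)
  fix p r
  show "x_op c c' a (p + r) = x_op c c' a p + x_op c c' a r"
    by (rule mod_eqI) (simp_all add: klinear_add[OF klinear_parts(1)] klinear_add[OF klinear_parts(2)]
        klinear_add[OF klinear_parts(3)] klinear_add[OF klinear_pbw_rep] klinear_add[OF klinear_pbw_rep_left]
        klinear_add[OF klinear_tens_right] algebra_simps)
next
  fix d p
  show "x_op c c' a (scal d p) = scal d (x_op c c' a p)"
    by (rule mod_eqI) (simp_all add: klinear_scal[OF klinear_parts(1)] klinear_scal[OF klinear_parts(2)]
        klinear_scal[OF klinear_parts(3)] klinear_scal[OF klinear_pbw_rep] klinear_scal[OF klinear_pbw_rep_left]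
        klinear_scal[OF klinear_tens_right] scal_add_right)
qed

primrec gen_op :: "('j::linorder \<Rightarrow> 'j \<Rightarrow> ('j \<Rightarrow>\<^sub>0 'k::comm_ring_1)) \<Rightarrow> ('j \<Rightarrow> 'j \<Rightarrow> ('j \<Rightarrow>\<^sub>0 'k))
    \<Rightarrow> 'j gen \<Rightarrow> ('j mod_index \<Rightarrow>\<^sub>0 'k) \<Rightarrow> ('j mod_index \<Rightarrow>\<^sub>0 'k)" where
  "gen_op c c' Qt = q_op"
| "gen_op c c' (Xg a) = x_op c c' a"

primrec word_act :: "('j::linorder \<Rightarrow> 'j \<Rightarrow> ('j \<Rightarrow>\<^sub>0 'k::comm_ring_1)) \<Rightarrow> ('j \<Rightarrow> 'j \<Rightarrow> ('j \<Rightarrow>\<^sub>0 'k))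
    \<Rightarrow> 'j gen list \<Rightarrow> ('j mod_index \<Rightarrow>\<^sub>0 'k) \<Rightarrow> ('j mod_index \<Rightarrow>\<^sub>0 'k)" where
  "word_act c c' [] v = v"
| "word_act c c' (g # w) v = gen_op c c' g (word_act c c' w v)"

lemma klinear_word_act: "klinear (word_act c c' w)"
proof (induction w)
  case (Cons g w)
  have "klinear (gen_op c c' g)" by (cases g) (simp_all add: klinear_q_op klinear_x_op)
  from klinear_comp[OF this Cons.IH] show ?case by simp
qed (simp add: klinear_id)

lemma word_act_append: "word_act c c' (u @ w) v = word_act c c' u (word_act c c' w v)"
  by (induction u) simp_all

definition tens_act :: "('j::linorder \<Rightarrow> 'j \<Rightarrow> ('j \<Rightarrow>\<^sub>0 'k::comm_ring_1)) \<Rightarrow> ('j \<Rightarrow> 'j \<Rightarrow> ('j \<Rightarrow>\<^sub>0 'k))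
    \<Rightarrow> ('j, 'k) tens \<Rightarrow> ('j mod_index \<Rightarrow>\<^sub>0 'k) \<Rightarrow> ('j mod_index \<Rightarrow>\<^sub>0 'k)" where
  "tens_act c c' p v = lin_ext (\<lambda>w. word_act c c' w v) p"

lemma klinear_tens_act_left: "klinear (\<lambda>p. tens_act c c' p v)"
  unfolding tens_act_def by (rule klinear_lin_ext)

lemma klinear_tens_act_right: "klinear (tens_act c c' p)"
  unfolding tens_act_def[abs_def] by (rule klinear_lin_ext_family) (rule klinear_word_act)

lemma tens_act_wd [simp]: "tens_act c c' (wd w) v = word_act c c' w v"
  by (simp add: tens_act_def wd_def)

lemma tens_act_tmul: "tens_act c c' (tmul p r) v = tens_act c c' p (tens_act c c' r v)"
proof -
  have "tens_act c c' (tmul p r) v = (\<Sum>u\<in>Poly_Mapping.keys p. \<Sum>w\<in>Poly_Mapping.keys r.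
      scal (Poly_Mapping.lookup p u * Poly_Mapping.lookup r w) (word_act c c' u (word_act c c' w v)))"
    unfolding tmul_def tens_act_def by (simp add: lin_ext_sum word_act_append)
  also have "\<dots> = tens_act c c' p (tens_act c c' r v)"
    unfolding tens_act_def lin_ext_def
    by (simp add: klinear_sum[OF klinear_word_act] klinear_scal[OF klinear_word_act] scal_sum)
  finally show ?thesis .
qed

lemma tens_act_hatL: "tens_act c c' (hatL y) v = lin_ext (\<lambda>j. x_op c c' j v) y"
proof -
  have "hatL y = lin_ext (\<lambda>j. wd [Xg j]) y"
    by (simp add: hatL_def lin_ext_def)
  then show ?thesis by (simp add: klinear_lin_ext_comm[OF klinear_tens_act_left])
qed

lemma tens_act_q_idempotent: "tens_act c c' (wd [Qt, Qt] - wd [Qt]) v = 0"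
  by (simp add: klinear_diff[OF klinear_tens_act_left] q_op_def)

(* \<tilde>q only sees the last summand, on which \<tilde>q acts as the identity *)
lemma part_a_word_act: "part_a (word_act c c' w (q_op v)) = part_a (word_act c c' w v)"
proof (induction w)
  case (Cons g w)
  then show ?case by (cases g) simp_all
qed simp

lemma part_a_tens_act: "part_a (tens_act c c' r (q_op v)) = part_a (tens_act c c' r v)"
  unfolding tens_act_def klinear_lin_ext_comm[OF klinear_parts(3)] part_a_word_act ..

lemma tens_act_q_absorbs: "tens_act c c' (tmul (wd [Qt]) (tmul r (wd [Qt])) - tmul (wd [Qt]) r) v = 0"
proof -
  have "q_op (tens_act c c' r (q_op v)) = q_op (tens_act c c' r v)"
    by (simp only: q_op_def[of "tens_act c c' r _"] part_a_tens_act)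
  then show ?thesis by (simp add: klinear_diff[OF klinear_tens_act_left] tens_act_tmul)
qed

text \<open>The key identity is that the
  bracket [x_i, x_j] acts on M like the six-term expression [\<hat>x_i, \<hat>x_j]_{6,k}; it is checked
  summand by summand, using the representation property of each PBW action.\<close>

lemma x_op_bracket:
  assumes lie: "is_lie_bracket c" and lie': "is_lie_bracket c'"
    and scaled: "\<And>i j. c i j = scal k (c' i j)"
  defines "X \<equiv> x_op c c'"
  shows "lin_ext (\<lambda>\<nu>. X \<nu> v) (c i j) = X i (X j v) - X j (X i v) - X i (X j (q_op v))
      + X j (X i (q_op v)) + scal k (X i (q_op (X j v))) - scal k (X j (q_op (X i v)))"
    (is "_ = ?rhs")
proof -
  define a b g where "a = part_c v" and "b = part_b v" and "g = part_a v"
  have comm_c: "pbw_rep c i (pbw_rep c j a) - pbw_rep c j (pbw_rep c i a) = lin_ext (\<lambda>\<nu>. pbw_rep c \<nu> a) (c i j)"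
    using pbw_representation[OF lie] by (simp add: pbw_commutes_def pbw_rep_elem_def)
  have comm_b: "pbw_rep_left c i (pbw_rep_left c j b) - pbw_rep_left c j (pbw_rep_left c i b)
      = lin_ext (\<lambda>\<nu>. pbw_rep_left c \<nu> b) (c i j)"
    by (rule pbw_rep_left_commutator[OF lie])
  have comm_a: "scal k (pbw_rep c' i (pbw_rep c' j g) - pbw_rep c' j (pbw_rep c' i g))
      = lin_ext (\<lambda>\<nu>. pbw_rep c' \<nu> g) (c i j)"
    using pbw_representation[OF lie'] by (simp add: pbw_commutes_def pbw_rep_elem_def scaled lin_ext_scal)
  have zero: "pbw_rep c x 0 = 0" "pbw_rep_left c x 0 = 0" "pbw_rep c' x 0 = 0" for x
    by (simp_all add: klinear_zero[OF klinear_pbw_rep] klinear_zero[OF klinear_pbw_rep_left])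
  have part_c: "part_c (lin_ext (\<lambda>\<nu>. X \<nu> v) (c i j)) = lin_ext (\<lambda>\<nu>. pbw_rep c \<nu> a) (c i j)"
    unfolding klinear_lin_ext_comm[OF klinear_parts(1)] a_def by (simp add: X_def)
  have part_b: "part_b (lin_ext (\<lambda>\<nu>. X \<nu> v) (c i j))
      = lin_ext (\<lambda>\<nu>. pbw_rep_left c \<nu> b) (c i j) + tens unit_mono (lin_ext (\<lambda>\<nu>. pbw_rep c' \<nu> g) (c i j))"
    unfolding klinear_lin_ext_comm[OF klinear_parts(2)] b_def g_def by (simp add: X_def lin_ext_fadd tens_lin_ext_right)
  have part_a: "part_a (lin_ext (\<lambda>\<nu>. X \<nu> v) (c i j)) = lin_ext (\<lambda>\<nu>. pbw_rep c' \<nu> g) (c i j)"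
    unfolding klinear_lin_ext_comm[OF klinear_parts(3)] g_def by (simp add: X_def)
  show ?thesis
  proof (rule mod_eqI)
    show "part_c (lin_ext (\<lambda>\<nu>. X \<nu> v) (c i j)) = part_c ?rhs"
      unfolding part_c comm_c[symmetric]
      by (simp add: klinear_diff[OF klinear_parts(1)] klinear_add[OF klinear_parts(1)]
          klinear_scal[OF klinear_parts(1)] zero a_def X_def)
    show "part_b (lin_ext (\<lambda>\<nu>. X \<nu> v) (c i j)) = part_b ?rhs"
      unfolding part_b comm_a[symmetric] comm_b[symmetric]
      by (simp add: klinear_diff[OF klinear_parts(2)] klinear_add[OF klinear_parts(2)]
          klinear_scal[OF klinear_parts(2)] b_def g_def X_def klinear_add[OF klinear_pbw_rep_left] zero
          klinear_diff[OF klinear_tens_right] klinear_scal[OF klinear_tens_right] scal_diff_right)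
    show "part_a (lin_ext (\<lambda>\<nu>. X \<nu> v) (c i j)) = part_a ?rhs"
      unfolding part_a comm_a[symmetric]
      by (simp add: klinear_diff[OF klinear_parts(3)] klinear_add[OF klinear_parts(3)]
          klinear_scal[OF klinear_parts(3)] g_def X_def scal_diff_right)
  qed
qed

lemma tens_act_bracket_relation:
  assumes lie: "is_lie_bracket c" and lie': "is_lie_bracket c'"
    and scaled: "\<And>i j. c i j = scal k (c' i j)"
  shows "tens_act c c' (hatL (c i j) - br6 k i j) v = 0"
proof -
  have "tens_act c c' (br6 k i j) v = lin_ext (\<lambda>\<nu>. x_op c c' \<nu> v) (c i j)"
    unfolding br6_def x_op_bracket[OF lie lie' scaled]
    by (simp add: klinear_diff[OF klinear_tens_act_left] klinear_add[OF klinear_tens_act_left]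
        klinear_scal[OF klinear_tens_act_left])
  then show ?thesis
    by (simp add: klinear_diff[OF klinear_tens_act_left] tens_act_hatL)
qed

primrec pbw_word :: "('j::linorder \<Rightarrow> 'j \<Rightarrow> ('j \<Rightarrow>\<^sub>0 'k::comm_ring_1)) \<Rightarrow> 'j list
    \<Rightarrow> ('j list \<Rightarrow>\<^sub>0 'k) \<Rightarrow> ('j list \<Rightarrow>\<^sub>0 'k)" where
  "pbw_word c [] g = g"
| "pbw_word c (a # u) g = pbw_rep c a (pbw_word c u g)"

primrec pbw_word_left :: "('j::linorder \<Rightarrow> 'j \<Rightarrow> ('j \<Rightarrow>\<^sub>0 'k::comm_ring_1)) \<Rightarrow> 'j list
    \<Rightarrow> (('j list \<times> 'x) \<Rightarrow>\<^sub>0 'k) \<Rightarrow> (('j list \<times> 'x) \<Rightarrow>\<^sub>0 'k)" where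
  "pbw_word_left c [] b = b"
| "pbw_word_left c (a # u) b = pbw_rep_left c a (pbw_word_left c u b)"

lemma klinear_pbw_word: "klinear (pbw_word c u)"
proof (induction u)
  case (Cons a u)
  from klinear_comp[OF klinear_pbw_rep Cons.IH] show ?case by simp
qed (simp add: klinear_id)

lemma klinear_pbw_word_left: "klinear (pbw_word_left c u)"
proof (induction u)
  case (Cons a u)
  from klinear_comp[OF klinear_pbw_rep_left Cons.IH] show ?case by simp
qed (simp add: klinear_id)

lemma pbw_word_sorted: "sorted s \<Longrightarrow> pbw_word c s unit_mono = Poly_Mapping.single s 1"
proof (induction s)
  case (Cons a s)
  then show ?case by (simp add: pbw_rep_single pbw_sorted)
qed (simp add: unit_mono_def)

lemma pbw_word_left_tens: "pbw_word_left c u (tens p r) = tens (pbw_word c u p) r"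
  by (induction u) (simp_all add: pbw_rep_left_tens)

(* x_{u_1} \<cdots> x_{u_n} acting on M: the middle summand collects the Leibniz-type transfer terms *)
lemma word_act_indices:
  "word_act c c' (map Xg u) v = mvec (pbw_word c u (part_c v))
      (pbw_word_left c u (part_b v)
        + (\<Sum>k<length u. tens (pbw_word c (take k u) unit_mono) (pbw_word c' (drop k u) (part_a v))))
      (pbw_word c' u (part_a v))"
proof (induction u)
  case Nil
  then show ?case by (simp add: mvec_parts)
next
  case (Cons a u)
  let ?f = "\<lambda>k. tens (pbw_word c (take k (a # u)) unit_mono) (pbw_word c' (drop k (a # u)) (part_a v))"
  have split: "(\<Sum>k<length (a # u). ?f k) = ?f 0 + (\<Sum>k<length u. ?f (Suc k))"
    by (simp add: sum.lessThan_Suc_shift del: sum.lessThan_Suc)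
  have shift: "pbw_rep_left c a (\<Sum>k<length u. tens (pbw_word c (take k u) unit_mono) (pbw_word c' (drop k u) (part_a v)))
      = (\<Sum>k<length u. ?f (Suc k))"
    by (simp add: klinear_sum[OF klinear_pbw_rep_left] pbw_rep_left_tens)
  show ?case
  proof (rule mod_eqI)
    show "part_b (word_act c c' (map Xg (a # u)) v) = part_b (mvec (pbw_word c (a # u) (part_c v))
        (pbw_word_left c (a # u) (part_b v) + (\<Sum>k<length (a # u). ?f k)) (pbw_word c' (a # u) (part_a v)))"
      unfolding split using shift by (simp add: Cons klinear_add[OF klinear_pbw_rep_left] add_ac)
  qed (simp_all add: Cons)
qed

section \<open>The read-out map from M to W\<close>

text \<open>W is the span of the model monomials inside the free space on words.  The read-out
  map is the linear extension of values on the basis of M, chosen so that applying a model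
  monomial to the base vector v0 and reading out gives that monomial.  On the last summand
  it sends x_s to \<tilde>q x_s; on the other two summands the values are determined by a
  triangular recursion.\<close>

definition read_a :: "'j::linorder list \<Rightarrow> ('j gen list \<Rightarrow>\<^sub>0 'k::comm_ring_1)" where
  "read_a s = (if sorted s then Poly_Mapping.single (Qt # map Xg s) 1 else 0)"

definition model_b :: "'j::linorder list \<Rightarrow> 'j list \<Rightarrow> ('j gen list \<Rightarrow>\<^sub>0 'k::comm_ring_1)" where
  "model_b u w = (case w of [] \<Rightarrow> 0 | j0 # js \<Rightarrow>
     if sorted u \<and> sorted w then Poly_Mapping.single (map Xg u @ [Xg j0, Qt] @ map Xg js) 1 else 0)"

function read_b :: "('j::linorder \<Rightarrow> 'j \<Rightarrow> ('j \<Rightarrow>\<^sub>0 'k::comm_ring_1)) \<Rightarrow> 'j list \<Rightarrow> 'j list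
    \<Rightarrow> ('j gen list \<Rightarrow>\<^sub>0 'k)" where
  "read_b c' u w = model_b u w
     - (\<Sum>k<length u. lin_ext (read_b c' (take k u)) (pbw_word c' (drop k u) (Poly_Mapping.single w 1)))
     - lin_ext read_a (pbw_word c' u (Poly_Mapping.single w 1))"
  by auto
termination by (relation "measure (\<lambda>(c', u, w). length u)") auto

declare read_b.simps [simp del]

lemma read_b_characteristic: "read_b c' u w
     + (\<Sum>k<length u. lin_ext (read_b c' (take k u)) (pbw_word c' (drop k u) (Poly_Mapping.single w 1)))
     + lin_ext read_a (pbw_word c' u (Poly_Mapping.single w 1)) = model_b u w"
  by (subst (1) read_b.simps) (simp add: algebra_simps)

definition read_c :: "('j::linorder \<Rightarrow> 'j \<Rightarrow> ('j \<Rightarrow>\<^sub>0 'k::comm_ring_1)) \<Rightarrow> 'j list \<Rightarrow> ('j gen list \<Rightarrow>\<^sub>0 'k)"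
where
  "read_c c' s = (if sorted s then Poly_Mapping.single (map Xg s) 1 else 0)
     - (\<Sum>k<length s. read_b c' (take k s) (drop k s)) - read_a s"

definition readout :: "('j::linorder \<Rightarrow> 'j \<Rightarrow> ('j \<Rightarrow>\<^sub>0 'k::comm_ring_1)) \<Rightarrow> ('j mod_index \<Rightarrow>\<^sub>0 'k)
    \<Rightarrow> ('j gen list \<Rightarrow>\<^sub>0 'k)" where
  "readout c' = lin_ext (\<lambda>x. case x of Inl s \<Rightarrow> read_c c' s | Inr (Inl uw) \<Rightarrow> read_b c' (fst uw) (snd uw)
                                    | Inr (Inr s) \<Rightarrow> read_a s)"

lemma klinear_readout: "klinear (readout c')"
  unfolding readout_def by (rule klinear_lin_ext)

lemma readout_mvec: "readout c' (mvec a b g)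
    = lin_ext (read_c c') a + lin_ext (\<lambda>uw. read_b c' (fst uw) (snd uw)) b + lin_ext read_a g"
  by (simp add: readout_def mvec_def emb_c_def emb_b_def emb_a_def lin_ext_add lin_ext_lin_ext)

lemma read_b_tens: "lin_ext (\<lambda>uw. read_b c' (fst uw) (snd uw)) (tens (Poly_Mapping.single u 1) r)
    = lin_ext (read_b c' u) r"
  unfolding tens_single_left lin_ext_lin_ext by simp

definition base_vec :: "'j mod_index \<Rightarrow>\<^sub>0 'k::comm_ring_1" where
  "base_vec = mvec unit_mono 0 unit_mono"

lemma readout_model_c:
  assumes "sorted s"
  shows "readout c' (word_act c c' (map Xg s) base_vec) = Poly_Mapping.single (map Xg s) 1"
proof -
  have "sorted (take k s)" "sorted (drop k s)" for k
    using assms by (simp_all add: sorted_wrt_take sorted_wrt_drop)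
  then have "word_act c c' (map Xg s) base_vec = mvec (Poly_Mapping.single s 1)
     (\<Sum>k<length s. Poly_Mapping.single (take k s, drop k s) 1) (Poly_Mapping.single s 1)"
    unfolding word_act_indices
    by (simp add: base_vec_def pbw_word_sorted[OF assms] pbw_word_sorted klinear_zero[OF klinear_pbw_word_left]
        tens_single)
  then show ?thesis
    by (simp add: readout_mvec lin_ext_sum read_c_def assms)
qed

lemma readout_model_a:
  assumes "sorted s"
  shows "readout c' (word_act c c' (Qt # map Xg s) base_vec) = Poly_Mapping.single (Qt # map Xg s) 1"
proof -
  have "part_a (word_act c c' (map Xg s) base_vec) = Poly_Mapping.single s 1"
    unfolding word_act_indices by (simp add: base_vec_def pbw_word_sorted[OF assms])
  then show ?thesis
    by (simp add: q_op_def readout_def emb_a_def lin_ext_lin_ext read_a_def assms)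
qed

lemma readout_model_b:
  assumes u: "sorted u" and w: "sorted (j0 # js)"
  shows "readout c' (word_act c c' (map Xg u @ [Xg j0, Qt] @ map Xg js) base_vec)
       = Poly_Mapping.single (map Xg u @ [Xg j0, Qt] @ map Xg js) 1"
proof -
  let ?w = "j0 # js"
  let ?zw = "Poly_Mapping.single ?w 1"
  have js: "sorted js" using w by simp
  have take: "sorted (take k u)" for k using u by (simp add: sorted_wrt_take)
  (* x_{j0} \<tilde>q x_{js} v0 lies in the last two summands *)
  define y where "y = x_op c c' j0 (q_op (word_act c c' (map Xg js) base_vec))"
  have part_a_js: "part_a (word_act c c' (map Xg js) base_vec) = Poly_Mapping.single js 1"
    unfolding word_act_indices by (simp add: base_vec_def pbw_word_sorted[OF js])
  have y: "part_c y = 0" "part_b y = tens unit_mono ?zw" "part_a y = ?zw"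
    by (simp_all add: y_def part_a_js pbw_rep_single js pbw_sorted[OF w] klinear_zero[OF klinear_pbw_rep]
        klinear_zero[OF klinear_pbw_rep_left])
  have "word_act c c' (map Xg u @ [Xg j0, Qt] @ map Xg js) base_vec = word_act c c' (map Xg u) y"
    by (simp add: word_act_append y_def)
  also have "\<dots> = mvec 0 (tens (Poly_Mapping.single u 1) ?zw
      + (\<Sum>k<length u. tens (Poly_Mapping.single (take k u) 1) (pbw_word c' (drop k u) ?zw)))
      (pbw_word c' u ?zw)"
    unfolding word_act_indices y
    by (simp add: klinear_zero[OF klinear_pbw_word] pbw_word_left_tens pbw_word_sorted[OF u] pbw_word_sorted[OF take])
  finally have "readout c' (word_act c c' (map Xg u @ [Xg j0, Qt] @ map Xg js) base_vec)
      = read_b c' u ?w + (\<Sum>k<length u. lin_ext (read_b c' (take k u)) (pbw_word c' (drop k u) ?zw))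
        + lin_ext read_a (pbw_word c' u ?zw)"
    by (simp add: readout_mvec lin_ext_add lin_ext_sum read_b_tens)
  also have "\<dots> = model_b u ?w" by (rule read_b_characteristic)
  finally show ?thesis using u w by (simp add: model_b_def)
qed

lemma model_monomial_a: "sorted s \<Longrightarrow> model_monomial (Qt # map Xg s)"
  unfolding model_monomial_def by (intro disjI1 exI[of _ s]) simp
lemma model_monomial_b: "sorted u \<Longrightarrow> sorted (j0 # js) \<Longrightarrow> model_monomial (map Xg u @ [Xg j0, Qt] @ map Xg js)"
  unfolding model_monomial_def by (intro disjI2 disjI1 exI[of _ u] exI[of _ j0] exI[of _ js]) simp
lemma model_monomial_c: "sorted s \<Longrightarrow> model_monomial (map Xg s)"
  unfolding model_monomial_def by (intro disjI2 exI[of _ s]) simp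

lemma keys_diff_subset: "Poly_Mapping.keys p \<subseteq> S \<Longrightarrow> Poly_Mapping.keys q \<subseteq> S \<Longrightarrow> Poly_Mapping.keys (p - q) \<subseteq> S"
  by (rule order_trans[OF keys_diff Un_least])
lemma keys_sum_subsetI: "(\<And>i. i \<in> I \<Longrightarrow> Poly_Mapping.keys (f i) \<subseteq> S) \<Longrightarrow> Poly_Mapping.keys (sum f I) \<subseteq> S"
  by (rule order_trans[OF keys_sum_subset UN_least])
lemma keys_lin_ext_subsetI:
  "(\<And>a. a \<in> Poly_Mapping.keys v \<Longrightarrow> Poly_Mapping.keys (f a) \<subseteq> S) \<Longrightarrow> Poly_Mapping.keys (lin_ext f v) \<subseteq> S"
  by (rule order_trans[OF keys_lin_ext UN_least])

lemma keys_read_a: "Poly_Mapping.keys (read_a s) \<subseteq> {M. model_monomial M}"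
  by (simp add: read_a_def model_monomial_a)

lemma keys_model_b: "Poly_Mapping.keys (model_b u w) \<subseteq> {M. model_monomial M}"
proof (cases w)
  case (Cons j0 js)
  show ?thesis
  proof (cases "sorted u \<and> sorted w")
    case True
    then have "model_monomial (map Xg u @ [Xg j0, Qt] @ map Xg js)"
      using Cons model_monomial_b by blast
    then show ?thesis using True Cons by (simp add: model_b_def)
  next
    case False
    then show ?thesis by (simp only: Cons model_b_def list.case if_not_P[OF False[unfolded Cons]]) simp
  qed
qed (simp add: model_b_def)

lemma keys_read_b: "Poly_Mapping.keys (read_b c' u w) \<subseteq> {M. model_monomial M}"
proof (induction c' u w rule: read_b.induct)
  case (1 c' u w)
  have shorter: "Poly_Mapping.keys (\<Sum>k<length u. lin_ext (read_b c' (take k u))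
      (pbw_word c' (drop k u) (Poly_Mapping.single w 1))) \<subseteq> {M. model_monomial M}"
    by (intro keys_sum_subsetI keys_lin_ext_subsetI) (use 1 in simp)
  have last: "Poly_Mapping.keys (lin_ext read_a (pbw_word c' u (Poly_Mapping.single w 1))) \<subseteq> {M. model_monomial M}"
    by (intro keys_lin_ext_subsetI keys_read_a)
  show ?case
    by (subst read_b.simps) (intro keys_diff_subset keys_model_b shorter last)
qed

lemma keys_read_c: "Poly_Mapping.keys (read_c c' s) \<subseteq> {M. model_monomial M}"
  unfolding read_c_def
  by (intro keys_diff_subset keys_sum_subsetI keys_read_b keys_read_a) (simp add: model_monomial_c)

lemma keys_readout: "Poly_Mapping.keys (readout c' v) \<subseteq> {M. model_monomial M}"
  unfolding readout_def
proof (rule keys_lin_ext_subsetI)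
  fix x :: "'a mod_index"
  show "Poly_Mapping.keys (case x of Inl s \<Rightarrow> read_c c' s | Inr (Inl uw) \<Rightarrow> read_b c' (fst uw) (snd uw)
      | Inr (Inr s) \<Rightarrow> read_a s) \<subseteq> {M. model_monomial M}"
  proof (cases x)
    case (Inr y)
    then show ?thesis by (cases y) (simp_all add: keys_read_a keys_read_b)
  qed (simp add: keys_read_c)
qed

section \<open>The normal form map \<sigma>\<close>

lemma readout_model_monomial:
  assumes "model_monomial M"
  shows "readout c' (word_act c c' M base_vec) = Poly_Mapping.single M 1"
  using assms unfolding model_monomial_def
proof (elim disjE exE conjE)
  fix js assume "sorted js" "M = Qt # map Xg js"
  then show ?thesis using readout_model_a by blast
next
  fix us j0 js assume "sorted us" "sorted (j0 # js)" "M = map Xg us @ [Xg j0, Qt] @ map Xg js"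
  then show ?thesis using readout_model_b by blast
next
  fix js assume "sorted js" "M = map Xg js"
  then show ?thesis using readout_model_c by blast
qed

lemma readout_ideal_zero:
  assumes "\<And>v. tens_act c c' r v = 0"
  shows "readout c' (tens_act c c' (tmul a (tmul r b)) base_vec) = 0"
  by (simp add: tens_act_tmul assms klinear_zero[OF klinear_tens_act_right] klinear_zero[OF klinear_readout])

theorem proposition6p2:
  fixes c :: "'j::linorder \<Rightarrow> 'j \<Rightarrow> ('j \<Rightarrow>\<^sub>0 'k::field)"
    and k :: 'k
  assumes "is_lie_bracket c"
    and "k \<noteq> 0"
  shows "\<exists>\<sigma> :: ('j, 'k) tens \<Rightarrow> ('j gen list \<Rightarrow>\<^sub>0 'k).
           klinear \<sigma>
         \<and> (\<forall>a. Poly_Mapping.keys (\<sigma> a) \<subseteq> {M. model_monomial M})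
         \<and> (\<forall>a b. \<sigma> (tmul a (tmul (wd [Qt, Qt] - wd [Qt]) b)) = 0)
         \<and> (\<forall>a b r. \<sigma> (tmul a (tmul (tmul (wd [Qt]) (tmul r (wd [Qt])) - tmul (wd [Qt]) r) b)) = 0)
         \<and> (\<forall>M. model_monomial M \<longrightarrow> \<sigma> (wd M) = Poly_Mapping.single M 1)
         \<and> (\<forall>a b i j. \<sigma> (tmul a (tmul (hatL (c i j) - br6 k i j) b)) = 0)"
proof -
  define c' where "c' = (\<lambda>i j. scal (inverse k) (c i j))"
  have lie': "is_lie_bracket c'"
    unfolding c'_def by (rule lie_bracket_scaled[OF assms(1)])
  have scaled: "c i j = scal k (c' i j)" for i j
    using assms(2) by (simp add: c'_def)
  define \<sigma> where "\<sigma> = (\<lambda>p. readout c' (tens_act c c' p base_vec))"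
  show ?thesis
  proof (intro exI[of _ \<sigma>] conjI allI impI)
    show "klinear \<sigma>"
      unfolding \<sigma>_def by (rule klinear_comp[OF klinear_readout klinear_tens_act_left])
    show "Poly_Mapping.keys (\<sigma> a) \<subseteq> {M. model_monomial M}" for a
      unfolding \<sigma>_def by (rule keys_readout)
    show "model_monomial M \<Longrightarrow> \<sigma> (wd M) = Poly_Mapping.single M 1" for M
      unfolding \<sigma>_def by (simp add: readout_model_monomial)
    show "\<sigma> (tmul a (tmul (wd [Qt, Qt] - wd [Qt]) b)) = 0" for a b
      unfolding \<sigma>_def by (rule readout_ideal_zero) (rule tens_act_q_idempotent)
    show "\<sigma> (tmul a (tmul (tmul (wd [Qt]) (tmul r (wd [Qt])) - tmul (wd [Qt]) r) b)) = 0" for a b r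
      unfolding \<sigma>_def by (rule readout_ideal_zero) (rule tens_act_q_absorbs)
    show "\<sigma> (tmul a (tmul (hatL (c i j) - br6 k i j) b)) = 0" for a b i j
      unfolding \<sigma>_def by (rule readout_ideal_zero) (rule tens_act_bracket_relation[OF assms(1) lie' scaled])
  qed
qed

end
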